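(* Let $n\ge 3$. The Hosoya polynomial of the power graph $P(G(n))$ of the gyrogroup $G(n)$ (defined in the context) is $$H(P(G(n)),x)=2^n x^0+\frac{2^{n-1}(2^{n-1}+1)}{2}x^1+\frac{3\cdot 2^{n-1}(2^{n-1}-1)}{2}x^2.$$
   Context: Let $n\ge 3$ be an integer and $m=2^{n-1}$. Let $P(n)=\{0,1,\dots,m-1\}$, $H(n)=\{m,m+1,\dots,2^n-1\}$ and $G(n)=P(n)\cup H(n)$. For $i,j\in G(n)$ let $t,s,k\in P(n)$ be the residues modulo $m$ (taken in $\{0,\dots,m-1\}$) of $i+j$, $i+(\frac m2-1)j$ and $(\frac m2+1)i+(\frac m2-1)j$, respectively, and define $i\oplus j=t$ if $i,j\in P(n)$; $i\oplus j=t+m$ if $i\in P(n),j\in H(n)$; $i\oplus j=s+m$ if $i\in H(n),j\in P(n)$; $i\oplus j=k$ if $i,j\in H(n)$. Then $(G(n),\oplus)$ is a gyrogroup with identity $e=0$. Powers are defined by $a^1=a$, $a^{k+1}=a^k\oplus a$. The power graph $P(G(n))$ is the simple undirected graph with vertex set $G(n)$ in which distinct vertices $u,v$ are adjacent if and only if $u^k=v$ or $v^k=u$ for some positive integer $k$. For a connected graph $G$, $dis(G,i)$ denotes the number of unordered pairs $\{u,v\}$ of vertices (with $u=v$ allowed) at distance $i$, and the Hosoya polynomial is $H(G,x)=\sum_{i\ge 0} dis(G,i)x^i$. *)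

theory Defs
  imports "HOL-Computational_Algebra.Polynomial"
begin

text \<open>The gyrogroup G(n) on the carrier {0..<2^n}; m = 2^(n-1);
  P(n) = {0..<m}, H(n) = {m..<2^n}.\<close>

definition gcarrier :: "nat \<Rightarrow> nat set" where
  "gcarrier n = {0..<2^n}"

definition gop :: "nat \<Rightarrow> nat \<Rightarrow> nat \<Rightarrow> nat" where
  "gop n i j =
    (let m = 2^(n-1);
         t = (i + j) mod m;
         s = (i + (m div 2 - 1) * j) mod m;
         k = ((m div 2 + 1) * i + (m div 2 - 1) * j) mod m
     in if i < m \<and> j < m then t
        else if i < m \<and> m \<le> j then t + m
        else if m \<le> i \<and> j < m then s + m
        else k)"

text \<open>Powers: a^1 = a, a^(k+1) = a^k \<oplus> a (meaningful for k \<ge> 1).\<close>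
definition gpow :: "nat \<Rightarrow> nat \<Rightarrow> nat \<Rightarrow> nat" where
  "gpow n a k = ((\<lambda>x. gop n x a) ^^ (k - 1)) a"

definition padj :: "nat \<Rightarrow> nat \<Rightarrow> nat \<Rightarrow> bool" where
  "padj n u v \<longleftrightarrow> u \<in> gcarrier n \<and> v \<in> gcarrier n \<and> u \<noteq> v \<and>
     (\<exists>k\<ge>1. gpow n u k = v \<or> gpow n v k = u)"

definition is_walk :: "'a set \<Rightarrow> ('a \<Rightarrow> 'a \<Rightarrow> bool) \<Rightarrow> 'a list \<Rightarrow> bool" where
  "is_walk V E xs \<longleftrightarrow> xs \<noteq> [] \<and> set xs \<subseteq> V \<and>
     (\<forall>i. Suc i < length xs \<longrightarrow> E (xs ! i) (xs ! Suc i))"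

definition connected_graph :: "'a set \<Rightarrow> ('a \<Rightarrow> 'a \<Rightarrow> bool) \<Rightarrow> bool" where
  "connected_graph V E \<longleftrightarrow> (\<forall>u\<in>V. \<forall>v\<in>V. \<exists>xs. is_walk V E xs \<and> hd xs = u \<and> last xs = v)"

definition gdist :: "'a set \<Rightarrow> ('a \<Rightarrow> 'a \<Rightarrow> bool) \<Rightarrow> 'a \<Rightarrow> 'a \<Rightarrow> nat" where
  "gdist V E u v = (LEAST k. \<exists>xs. is_walk V E xs \<and> hd xs = u \<and> last xs = v \<and> length xs = Suc k)"

definition dis :: "'a set \<Rightarrow> ('a \<Rightarrow> 'a \<Rightarrow> bool) \<Rightarrow> nat \<Rightarrow> nat" where
  "dis V E i = card {{u, v} | u v. u \<in> V \<and> v \<in> V \<and> gdist V E u v = i}"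

text \<open>Hosoya polynomial; in a connected graph all distances are < card V.\<close>
definition hosoya :: "'a set \<Rightarrow> ('a \<Rightarrow> 'a \<Rightarrow> bool) \<Rightarrow> real poly" where
  "hosoya V E = (\<Sum>i<card V. monom (real (dis V E i)) i)"

end

theory Submission
  imports Defs "HOL-Computational_Algebra.Primes"
begin

text \<open>For \<open>x \<in> P(n)\<close> the powers are the multiples \<open>k x mod m\<close> in the cyclic group \<open>\<int>/m\<close>, whose
  subgroups form a chain because \<open>m\<close> is a prime power; so \<open>P(n)\<close> induces a complete graph.
  Every \<open>x \<in> H(n)\<close> has order two (\<open>x \<oplus> x = 0\<close>), so its only neighbour is \<open>0\<close>. Hence \<open>0\<close> is
  adjacent to every vertex, all distances are at most 2, and the Hosoya polynomial is
  determined by the number \<open>(m choose 2) + m\<close> of edges.\<close>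

section \<open>Distances in a graph with a dominating vertex\<close>

lemma is_walk_singleton: "is_walk V E [u] \<longleftrightarrow> u \<in> V"
  unfolding is_walk_def by auto

lemma is_walk_pair: "is_walk V E [u, v] \<longleftrightarrow> u \<in> V \<and> v \<in> V \<and> E u v"
  unfolding is_walk_def by (auto simp: less_Suc_eq)

lemma is_walk_triple:
  "u \<in> V \<Longrightarrow> w \<in> V \<Longrightarrow> v \<in> V \<Longrightarrow> E u w \<Longrightarrow> E w v \<Longrightarrow> is_walk V E [u, w, v]"
  unfolding is_walk_def by (auto simp: less_Suc_eq nth_Cons split: nat.split)

lemma hd_eq_last_if_length_eq_1: "length xs = 1 \<Longrightarrow> hd xs = last xs"
  by (cases xs) auto

lemma is_walk_length_2_adj:
  assumes "is_walk V E xs" "length xs = 2"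
  shows "E (hd xs) (last xs)"
proof -
  obtain u v where "xs = [u, v]"
    using assms(2) by (metis One_nat_def Suc_1 length_0_conv length_Suc_conv)
  then show ?thesis using assms(1) by (simp add: is_walk_pair)
qed

lemma gdist_refl: "u \<in> V \<Longrightarrow> gdist V E u u = 0"
  unfolding gdist_def by (rule Least_eq_0) (auto intro!: exI[of _ "[u]"] simp: is_walk_singleton)

lemma gdist_eq_1:
  assumes "u \<in> V" "v \<in> V" "E u v" "u \<noteq> v"
  shows "gdist V E u v = 1"
  unfolding gdist_def
proof (rule Least_equality)
  show "\<exists>xs. is_walk V E xs \<and> hd xs = u \<and> last xs = v \<and> length xs = Suc 1"
    using assms by (intro exI[of _ "[u, v]"]) (simp add: is_walk_pair)
next
  fix k assume "\<exists>xs. is_walk V E xs \<and> hd xs = u \<and> last xs = v \<and> length xs = Suc k"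
  then show "1 \<le> k"
    using hd_eq_last_if_length_eq_1 assms(4) by (cases k) fastforce+
qed

lemma gdist_eq_2:
  assumes "u \<in> V" "v \<in> V" "w \<in> V" "E u w" "E w v" "\<not> E u v" "u \<noteq> v"
  shows "gdist V E u v = 2"
  unfolding gdist_def
proof (rule Least_equality)
  show "\<exists>xs. is_walk V E xs \<and> hd xs = u \<and> last xs = v \<and> length xs = Suc 2"
    using assms by (intro exI[of _ "[u, w, v]"]) (simp add: is_walk_triple)
next
  fix k assume walk: "\<exists>xs. is_walk V E xs \<and> hd xs = u \<and> last xs = v \<and> length xs = Suc k"
  show "2 \<le> k"
  proof (rule ccontr)
    assume "\<not> 2 \<le> k"
    then have "k = 0 \<or> k = 1" by auto
    then show False
      using walk hd_eq_last_if_length_eq_1 is_walk_length_2_adj assms(6,7) by fastforce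
  qed
qed

definition dominating_vertex :: "'a set \<Rightarrow> ('a \<Rightarrow> 'a \<Rightarrow> bool) \<Rightarrow> 'a \<Rightarrow> bool" where
  "dominating_vertex V E c \<longleftrightarrow> c \<in> V \<and> (\<forall>v\<in>V. v \<noteq> c \<longrightarrow> E c v \<and> E v c)"

lemma dominating_vertex_common_neighbour:
  assumes "dominating_vertex V E c" "u \<in> V" "v \<in> V" "u \<noteq> v" "\<not> E u v"
  shows "c \<in> V \<and> E u c \<and> E c v"
proof -
  have "u \<noteq> c" "v \<noteq> c" using assms unfolding dominating_vertex_def by auto
  then show ?thesis using assms(1-3) unfolding dominating_vertex_def by auto
qed

lemma gdist_if_dominating_vertex:
  assumes "dominating_vertex V E c" "u \<in> V" "v \<in> V"
  shows "gdist V E u v = (if u = v then 0 else if E u v then 1 else 2)"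
  using assms(2,3) gdist_refl gdist_eq_1
    gdist_eq_2[of u V v c] dominating_vertex_common_neighbour[OF assms] by auto

lemma connected_graph_if_dominating_vertex:
  assumes "dominating_vertex V E c"
  shows "connected_graph V E"
  unfolding connected_graph_def
proof (intro ballI)
  fix u v assume uv: "u \<in> V" "v \<in> V"
  consider "u = v" | "u \<noteq> v" "E u v" | "u \<noteq> v" "\<not> E u v" by blast
  then show "\<exists>xs. is_walk V E xs \<and> hd xs = u \<and> last xs = v"
  proof cases
    case 1
    then show ?thesis using uv by (intro exI[of _ "[u]"]) (simp add: is_walk_singleton)
  next
    case 2
    then show ?thesis using uv by (intro exI[of _ "[u, v]"]) (simp add: is_walk_pair)
  next
    case 3
    then show ?thesis
      using uv dominating_vertex_common_neighbour[OF assms uv]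
      by (intro exI[of _ "[u, c, v]"]) (simp add: is_walk_triple)
  qed
qed

lemma dis_if_dominating_vertex:
  assumes "dominating_vertex V E c"
  shows "dis V E i = card {{u, v} | u v. u \<in> V \<and> v \<in> V \<and>
    (if u = v then 0 else if E u v then 1 else 2) = i}"
  unfolding dis_def using gdist_if_dominating_vertex[OF assms] by metis

lemma dis_0_if_dominating_vertex:
  assumes "dominating_vertex V E c"
  shows "dis V E 0 = card V"
proof -
  have "{{u, v} | u v. u \<in> V \<and> v \<in> V \<and> (if u = v then 0 else if E u v then 1 else 2) = (0::nat)}
      = (\<lambda>u. {u}) ` V"
    by auto
  then show ?thesis
    unfolding dis_if_dominating_vertex[OF assms] by (simp add: card_image)
qed

lemma dis_1_if_dominating_vertex:
  assumes "dominating_vertex V E c"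
  shows "dis V E 1 = card {{u, v} | u v. u \<in> V \<and> v \<in> V \<and> u \<noteq> v \<and> E u v}"
proof -
  have "{{u, v} | u v. u \<in> V \<and> v \<in> V \<and> (if u = v then 0 else if E u v then 1 else 2) = (1::nat)}
      = {{u, v} | u v. u \<in> V \<and> v \<in> V \<and> u \<noteq> v \<and> E u v}"
    by auto
  then show ?thesis unfolding dis_if_dominating_vertex[OF assms] by simp
qed

lemma dis_eq_0_if_dominating_vertex:
  assumes "dominating_vertex V E c" "i \<ge> 3"
  shows "dis V E i = 0"
proof -
  have "{{u, v} | u v. u \<in> V \<and> v \<in> V \<and> (if u = v then 0 else if E u v then 1 else 2) = i} = {}"
    using assms(2) by auto
  then show ?thesis unfolding dis_if_dominating_vertex[OF assms(1)] by (metis card.empty)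
qed

lemma dis_1_add_dis_2_if_dominating_vertex:
  assumes "dominating_vertex V E c" "finite V" "\<And>u v. E u v \<Longrightarrow> E v u"
  shows "dis V E 1 + dis V E 2 = card V choose 2"
proof -
  define S1 where "S1 = {{u, v} | u v. u \<in> V \<and> v \<in> V \<and> u \<noteq> v \<and> E u v}"
  define S2 where "S2 = {{u, v} | u v. u \<in> V \<and> v \<in> V \<and> u \<noteq> v \<and> \<not> E u v}"
  have "{{u, v} | u v. u \<in> V \<and> v \<in> V \<and> (if u = v then 0 else if E u v then 1 else 2) = (2::nat)}
      = S2"
    unfolding S2_def by auto
  then have "dis V E 2 = card S2"
    unfolding dis_if_dominating_vertex[OF assms(1)] by simp
  moreover have "S1 \<union> S2 = {B. B \<subseteq> V \<and> card B = 2}"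
    unfolding S1_def S2_def card_2_iff by blast
  moreover have "S1 \<inter> S2 = {}"
    unfolding S1_def S2_def using assms(3) by (auto simp: doubleton_eq_iff)
  moreover have "finite {B. B \<subseteq> V \<and> card B = 2}"
    using assms(2) by simp
  ultimately show ?thesis
    using dis_1_if_dominating_vertex[OF assms(1)] n_subsets[OF assms(2), of 2]
    by (metis S1_def card_Un_disjoint finite_Un)
qed

lemma monom_add_monom_add_monom: "monom a 0 + monom b 1 + monom c 2 = [:a, b, c:]"
  by (simp add: poly_eq_iff coeff_pCons coeff_monom split: nat.split)

lemma of_nat_choose_2: "real (N choose 2) = real N * (real N - 1) / 2"
proof -
  have "2 * (N choose 2) = N * (N - 1)"
    unfolding choose_two by (cases N) auto
  then have "2 * real (N choose 2) = real N * real (N - 1)"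
    by (metis of_nat_mult of_nat_numeral)
  then show ?thesis by (cases N) auto
qed

lemma hosoya_if_dominating_vertex:
  assumes "dominating_vertex V E c" "card V \<ge> 3"
  shows "hosoya V E = [:real (dis V E 0), real (dis V E 1), real (dis V E 2):]"
proof -
  have "hosoya V E = (\<Sum>i<3. monom (real (dis V E i)) i)"
    unfolding hosoya_def
    by (rule sum.mono_neutral_right) (use assms dis_eq_0_if_dominating_vertex in auto)
  also have "\<dots> = monom (real (dis V E 0)) 0 + monom (real (dis V E 1)) 1 + monom (real (dis V E 2)) 2"
    by (simp add: eval_nat_numeral)
  also have "\<dots> = [:real (dis V E 0), real (dis V E 1), real (dis V E 2):]"
    by (rule monom_add_monom_add_monom)
  finally show ?thesis .
qed

section \<open>Cyclic groups of prime power order\<close>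

lemma exists_mult_mod_eq_if_gcd_dvd:
  fixes u v N :: nat
  assumes "v < N" "gcd u N dvd v"
  shows "\<exists>k\<ge>1. (k * u) mod N = v"
proof (cases "u = 0")
  case True
  then have "v = 0" using assms by (auto dest: dvd_imp_le)
  then show ?thesis using True by auto
next
  case False
  obtain x y where xy: "u * x = N * y + gcd u N" using bezout_nat[OF False] by blast
  obtain c where c: "v = gcd u N * c" using assms(2) by blast
  have "(x * c) * u = N * (y * c) + v" using xy c by (simp add: algebra_simps)
  then have xc: "((x * c) * u) mod N = v" using assms(1) by simp
  show ?thesis
  proof (cases "x * c = 0")
    case True
    then show ?thesis using xc assms(1) by (intro exI[of _ N]) auto
  next
    case False
    then show ?thesis using xc by (intro exI[of _ "x * c"]) auto
  qed
qed

lemma prime_power_exists_mult_mod_eq: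
  fixes p u v r :: nat
  assumes "prime p" "u < p ^ r" "v < p ^ r"
  shows "\<exists>k\<ge>1. (k * u) mod p ^ r = v \<or> (k * v) mod p ^ r = u"
proof -
  obtain i where i: "gcd u (p ^ r) = p ^ i"
    using divides_primepow_nat[OF assms(1), of "gcd u (p ^ r)" r] by auto
  obtain j where j: "gcd v (p ^ r) = p ^ j"
    using divides_primepow_nat[OF assms(1), of "gcd v (p ^ r)" r] by auto
  have "gcd u (p ^ r) dvd v \<or> gcd v (p ^ r) dvd u"
    using i j by (metis gcd_dvd1 dvd_trans le_imp_power_dvd nat_le_linear)
  then show ?thesis
    using exists_mult_mod_eq_if_gcd_dvd assms(2,3) by blast
qed

section \<open>Powers in the gyrogroup \<open>G(n)\<close>\<close>

lemma two_power_eq_twice_pred: "n \<ge> 1 \<Longrightarrow> (2::nat) ^ n = 2 * 2 ^ (n - 1)"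
  by (metis Suc_diff_le diff_Suc_1 power_Suc)

lemma gop_low_low: "i < 2 ^ (n - 1) \<Longrightarrow> j < 2 ^ (n - 1) \<Longrightarrow> gop n i j = (i + j) mod 2 ^ (n - 1)"
  unfolding gop_def Let_def by simp

lemma gop_zero_high:
  assumes "n \<ge> 1" "2 ^ (n - 1) \<le> j" "j < 2 ^ n"
  shows "gop n 0 j = j"
proof -
  have "j mod 2 ^ (n - 1) = j - 2 ^ (n - 1)"
    using assms two_power_eq_twice_pred[OF assms(1)] by (simp add: le_mod_geq)
  then show ?thesis using assms unfolding gop_def Let_def by simp
qed

text \<open>On \<open>H(n) \<times> H(n)\<close> the coefficients \<open>m/2 + 1\<close> and \<open>m/2 - 1\<close> add up to \<open>m\<close>.\<close>
lemma gop_high_self: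
  assumes "n \<ge> 2" "2 ^ (n - 1) \<le> a"
  shows "gop n a a = 0"
proof -
  have "(2::nat) ^ (n - 1) = 2 * 2 ^ (n - 2)"
    using two_power_eq_twice_pred[of "n - 1"] assms(1) by (simp add: diff_diff_add)
  then have "(2 ^ (n - 1) div 2 + 1) + (2 ^ (n - 1) div 2 - 1) = (2::nat) ^ (n - 1)"
    by simp
  then have "(2 ^ (n - 1) div 2 + 1) * a + (2 ^ (n - 1) div 2 - 1) * a = (2::nat) ^ (n - 1) * a"
    by (metis distrib_right)
  then show ?thesis using assms unfolding gop_def Let_def by simp
qed

lemma gpow_Suc: "k \<ge> 1 \<Longrightarrow> gpow n a (Suc k) = gop n (gpow n a k) a"
  unfolding gpow_def by (cases k) auto

lemma gpow_low:
  assumes "a < 2 ^ (n - 1)" "k \<ge> 1"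
  shows "gpow n a k = (k * a) mod 2 ^ (n - 1)"
  using assms(2)
proof (induction k rule: dec_induct)
  case base
  then show ?case using assms(1) by (simp add: gpow_def)
next
  case (step k)
  then have "gpow n a (Suc k) = ((k * a) mod 2 ^ (n - 1) + a) mod 2 ^ (n - 1)"
    using assms(1) by (simp add: gpow_Suc gop_low_low)
  also have "\<dots> = (Suc k * a) mod 2 ^ (n - 1)"
    by (metis mod_add_left_eq add.commute mult_Suc)
  finally show ?case .
qed

lemma gpow_high:
  assumes "n \<ge> 2" "2 ^ (n - 1) \<le> a" "a < 2 ^ n" "k \<ge> 1"
  shows "gpow n a k = (if odd k then a else 0)"
  using assms(4)
proof (induction k rule: dec_induct)
  case base
  then show ?case by (simp add: gpow_def)
next
  case (step k)
  then show ?case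
    using assms gop_high_self gop_zero_high[of n a] by (auto simp: gpow_Suc)
qed

section \<open>The power graph of \<open>G(n)\<close>\<close>

lemma gpow_cases:
  assumes "n \<ge> 2" "a < 2 ^ n" "k \<ge> 1"
  shows "(a < 2 ^ (n - 1) \<and> gpow n a k < 2 ^ (n - 1)) \<or> gpow n a k = a \<or> gpow n a k = 0"
  using gpow_low[OF _ assms(3), of a n] gpow_high[OF assms(1) _ assms(2,3)]
  by (cases "a < 2 ^ (n - 1)") auto

lemma gpow_eq_zero_exists:
  assumes "n \<ge> 2" "a < 2 ^ n"
  shows "\<exists>k\<ge>1. gpow n a k = 0"
proof (cases "a < 2 ^ (n - 1)")
  case True
  then show ?thesis using gpow_low[OF True, of "2 ^ (n - 1)"] by (intro exI[of _ "2 ^ (n - 1)"]) simp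
next
  case False
  then show ?thesis using gpow_high[OF assms(1) _ assms(2), of 2] by (intro exI[of _ 2]) simp
qed

lemma padj_iff:
  assumes "n \<ge> 2"
  shows "padj n u v \<longleftrightarrow> u \<in> gcarrier n \<and> v \<in> gcarrier n \<and> u \<noteq> v \<and>
    ((u < 2 ^ (n - 1) \<and> v < 2 ^ (n - 1)) \<or> u = 0 \<or> v = 0)"
proof
  assume "padj n u v"
  then obtain k where "k \<ge> 1" "gpow n u k = v \<or> gpow n v k = u"
    and uv: "u \<in> gcarrier n" "v \<in> gcarrier n" "u \<noteq> v"
    unfolding padj_def by blast
  then show "u \<in> gcarrier n \<and> v \<in> gcarrier n \<and> u \<noteq> v \<and>
    ((u < 2 ^ (n - 1) \<and> v < 2 ^ (n - 1)) \<or> u = 0 \<or> v = 0)"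
    using gpow_cases[OF assms, of u k] gpow_cases[OF assms, of v k] unfolding gcarrier_def by auto
next
  assume uv: "u \<in> gcarrier n \<and> v \<in> gcarrier n \<and> u \<noteq> v \<and>
    ((u < 2 ^ (n - 1) \<and> v < 2 ^ (n - 1)) \<or> u = 0 \<or> v = 0)"
  have "\<exists>k\<ge>1. gpow n u k = v \<or> gpow n v k = u"
  proof (cases "u < 2 ^ (n - 1) \<and> v < 2 ^ (n - 1)")
    case True
    then obtain k where "k \<ge> 1" "(k * u) mod 2 ^ (n - 1) = v \<or> (k * v) mod 2 ^ (n - 1) = u"
      using prime_power_exists_mult_mod_eq[of 2 u "n - 1" v] by auto
    then show ?thesis using gpow_low[of u n k] gpow_low[of v n k] True by metis
  next
    case False
    then show ?thesis
      using uv gpow_eq_zero_exists[OF assms] unfolding gcarrier_def by (metis atLeastLessThan_iff)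
  qed
  then show "padj n u v" using uv unfolding padj_def by blast
qed

lemma padj_sym: "padj n u v \<Longrightarrow> padj n v u"
  unfolding padj_def by auto

lemma dominating_vertex_zero:
  assumes "n \<ge> 2"
  shows "dominating_vertex (gcarrier n) (padj n) 0"
  unfolding dominating_vertex_def padj_iff[OF assms] by (simp add: gcarrier_def)

lemma card_padj_edges:
  assumes "n \<ge> 2"
  shows "card {{u, v} | u v. u \<in> gcarrier n \<and> v \<in> gcarrier n \<and> u \<noteq> v \<and> padj n u v}
    = (2 ^ (n - 1) choose 2) + 2 ^ (n - 1)"
proof -
  define m :: nat where "m = 2 ^ (n - 1)"
  have carrier: "gcarrier n = {0..<2 * m}"
    unfolding gcarrier_def m_def using two_power_eq_twice_pred[of n] assms by simp
  define A1 where "A1 = {B. B \<subseteq> {0..<m} \<and> card B = 2}"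
  define A2 where "A2 = (\<lambda>v. {0, v}) ` {m..<2 * m}"
  have "m > 0" unfolding m_def by simp
  have "{{u, v} | u v. u \<in> gcarrier n \<and> v \<in> gcarrier n \<and> u \<noteq> v \<and> padj n u v} = A1 \<union> A2"
    (is "?edges = _")
  proof (intro equalityI subsetI)
    fix B assume "B \<in> ?edges"
    then obtain u v where "B = {u, v}" "u \<noteq> v" "u < 2 * m" "v < 2 * m"
      "(u < m \<and> v < m) \<or> u = 0 \<or> v = 0"
      unfolding padj_iff[OF assms] carrier m_def by auto
    then show "B \<in> A1 \<union> A2"
      unfolding A1_def A2_def card_2_iff by (auto simp: insert_commute)
  next
    fix B assume "B \<in> A1 \<union> A2"
    then consider x y where "B = {x, y}" "x \<noteq> y" "x < m" "y < m"
      | v where "B = {0, v}" "m \<le> v" "v < 2 * m"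
      unfolding A1_def A2_def card_2_iff by auto
    then show "B \<in> ?edges"
    proof cases
      case 1
      then show ?thesis unfolding padj_iff[OF assms] carrier m_def[symmetric] by fastforce
    next
      case 2
      then show ?thesis using \<open>m > 0\<close> unfolding padj_iff[OF assms] carrier m_def[symmetric] by fastforce
    qed
  qed
  moreover have "A1 \<inter> A2 = {}"
    unfolding A1_def A2_def by (auto simp: subset_iff)
  moreover have "card A1 = m choose 2"
    unfolding A1_def using n_subsets[of "{0..<m}" 2] by simp
  moreover have "card A2 = m"
    unfolding A2_def by (subst card_image) (auto simp: inj_on_def doubleton_eq_iff)
  moreover have "finite A1" "finite A2"
    unfolding A1_def A2_def by simp_all
  ultimately show ?thesis
    unfolding m_def by (simp add: card_Un_disjoint)
qed

lemma dis_padj: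
  assumes "n \<ge> 2"
  shows "real (dis (gcarrier n) (padj n) 0) = 2 ^ n"
    and "real (dis (gcarrier n) (padj n) 1) = 2 ^ (n - 1) * (2 ^ (n - 1) + 1) / 2"
    and "real (dis (gcarrier n) (padj n) 2) = 3 * 2 ^ (n - 1) * (2 ^ (n - 1) - 1) / 2"
proof -
  note dominating = dominating_vertex_zero[OF assms]
  define m :: nat where "m = 2 ^ (n - 1)"
  have card: "card (gcarrier n) = 2 * m"
    unfolding gcarrier_def m_def using two_power_eq_twice_pred[of n] assms by simp
  show "real (dis (gcarrier n) (padj n) 0) = 2 ^ n"
    using dis_0_if_dominating_vertex[OF dominating] by (simp add: gcarrier_def)
  have "dis (gcarrier n) (padj n) 1 = (m choose 2) + m"
    using dis_1_if_dominating_vertex[OF dominating] card_padj_edges[OF assms] unfolding m_def by simp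
  then have dis1: "real (dis (gcarrier n) (padj n) 1) = real m * (real m + 1) / 2"
    by (simp add: of_nat_choose_2 field_simps)
  then show "real (dis (gcarrier n) (padj n) 1) = 2 ^ (n - 1) * (2 ^ (n - 1) + 1) / 2"
    unfolding m_def by simp
  have "dis (gcarrier n) (padj n) 1 + dis (gcarrier n) (padj n) 2 = 2 * m choose 2"
    using dis_1_add_dis_2_if_dominating_vertex[OF dominating] padj_sym card
    unfolding gcarrier_def by simp
  then have "real (dis (gcarrier n) (padj n) 2) = real (2 * m choose 2) - real m * (real m + 1) / 2"
    using dis1 by (metis add_diff_cancel_left' of_nat_add)
  then have "real (dis (gcarrier n) (padj n) 2) = 3 * real m * (real m - 1) / 2"
    by (simp add: of_nat_choose_2 field_simps)
  then show "real (dis (gcarrier n) (padj n) 2) = 3 * 2 ^ (n - 1) * (2 ^ (n - 1) - 1) / 2"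
    unfolding m_def by simp
qed

theorem mainTheorem4:
  fixes n :: nat
  assumes "n \<ge> 3"
  shows "connected_graph (gcarrier n) (padj n) \<and>
    hosoya (gcarrier n) (padj n) =
      [: 2 ^ n,
         2 ^ (n-1) * (2 ^ (n-1) + 1) / 2,
         3 * 2 ^ (n-1) * (2 ^ (n-1) - 1) / 2 :]"
proof -
  have n: "n \<ge> 2" using assms by simp
  have "card (gcarrier n) \<ge> 3"
    using power_increasing[of 2 n "2::nat"] assms unfolding gcarrier_def by simp
  then show ?thesis
    using connected_graph_if_dominating_vertex[OF dominating_vertex_zero[OF n]]
      hosoya_if_dominating_vertex[OF dominating_vertex_zero[OF n]] dis_padj[OF n]
    by simp
qed

end
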